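(* Let $G$ be a simple connected graph with $n$ vertices and $m$ edges, let $k\ge1$ be an integer, and let $S_k(G)$ be the $k$-parallel subdivision graph of $G$. If $\sigma\neq 1$ is an eigenvalue of $\mathscr{L}(S_k(G))$, then $4\sigma-2\sigma^2$ is an eigenvalue of $\mathscr{L}(G)$, and its multiplicity is the same as that of $\sigma$.
   Context: For a graph $H$ with adjacency matrix $A(H)$ and diagonal degree matrix $D(H)$ (no isolated vertices), the normalized Laplacian is $\mathscr{L}(H)=I-D(H)^{-1/2}A(H)D(H)^{-1/2}$. The $k$-parallel subdivision graph $S_k(G)$ is obtained from $G$ by replacing each edge $uv$ of $G$ by $k$ internally disjoint paths $u-w-v$ of length $2$ (each with its own new middle vertex $w$). *)

theory Defs
  imports "Jordan_Normal_Form.Char_Poly"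
begin

definition simple_graph :: "'a set \<Rightarrow> ('a \<Rightarrow> 'a \<Rightarrow> bool) \<Rightarrow> bool" where
  "simple_graph V E \<longleftrightarrow> finite V \<and> (\<forall>u v. E u v \<longrightarrow> u \<in> V \<and> v \<in> V)
     \<and> (\<forall>u v. E u v \<longrightarrow> E v u) \<and> (\<forall>u. \<not> E u u)"

definition connected_graph :: "'a set \<Rightarrow> ('a \<Rightarrow> 'a \<Rightarrow> bool) \<Rightarrow> bool" where
  "connected_graph V E \<longleftrightarrow> V \<noteq> {} \<and> (\<forall>u\<in>V. \<forall>v\<in>V. E\<^sup>*\<^sup>* u v)"

definition degree :: "'a set \<Rightarrow> ('a \<Rightarrow> 'a \<Rightarrow> bool) \<Rightarrow> 'a \<Rightarrow> nat" where
  "degree V E v = card {u\<in>V. E v u}"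

definition vertex_enum :: "'a set \<Rightarrow> nat \<Rightarrow> 'a" where
  "vertex_enum V = (SOME f. bij_betw f {..<card V} V)"

definition adj_matrix :: "'a set \<Rightarrow> ('a \<Rightarrow> 'a \<Rightarrow> bool) \<Rightarrow> real mat" where
  "adj_matrix V E = mat (card V) (card V)
     (\<lambda>(i,j). if E (vertex_enum V i) (vertex_enum V j) then 1 else 0)"

definition deg_matrix :: "'a set \<Rightarrow> ('a \<Rightarrow> 'a \<Rightarrow> bool) \<Rightarrow> real mat" where
  "deg_matrix V E = mat (card V) (card V)
     (\<lambda>(i,j). if i = j then real (degree V E (vertex_enum V i)) else 0)"

definition deg_inv_sqrt_matrix :: "'a set \<Rightarrow> ('a \<Rightarrow> 'a \<Rightarrow> bool) \<Rightarrow> real mat" where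
  "deg_inv_sqrt_matrix V E = mat (card V) (card V)
     (\<lambda>(i,j). if i = j then 1 / sqrt (real (degree V E (vertex_enum V i))) else 0)"

definition norm_laplacian :: "'a set \<Rightarrow> ('a \<Rightarrow> 'a \<Rightarrow> bool) \<Rightarrow> real mat" where
  "norm_laplacian V E = 1\<^sub>m (card V) - deg_inv_sqrt_matrix V E * adj_matrix V E * deg_inv_sqrt_matrix V E"

definition graph_edges :: "'a set \<Rightarrow> ('a \<Rightarrow> 'a \<Rightarrow> bool) \<Rightarrow> 'a set set" where
  "graph_edges V E = {{u, v} | u v. u \<in> V \<and> v \<in> V \<and> E u v}"

text \<open>k-parallel subdivision graph: original vertices Inl v; for each edge e and each j<k
  a new middle vertex Inr (e, j) adjacent exactly to the two endpoints of e.\<close>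
definition subdiv_vertices :: "nat \<Rightarrow> 'a set \<Rightarrow> ('a \<Rightarrow> 'a \<Rightarrow> bool) \<Rightarrow> ('a + 'a set \<times> nat) set" where
  "subdiv_vertices k V E = Inl ` V \<union> Inr ` (graph_edges V E \<times> {..<k})"

definition subdiv_adj :: "nat \<Rightarrow> 'a set \<Rightarrow> ('a \<Rightarrow> 'a \<Rightarrow> bool)
    \<Rightarrow> ('a + 'a set \<times> nat) \<Rightarrow> ('a + 'a set \<times> nat) \<Rightarrow> bool" where
  "subdiv_adj k V E x y \<longleftrightarrow>
     (\<exists>u e j. u \<in> V \<and> e \<in> graph_edges V E \<and> j < k \<and> u \<in> e \<and>
        ((x = Inl u \<and> y = Inr (e, j)) \<or> (x = Inr (e, j) \<and> y = Inl u)))"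

end

theory Submission
  imports Defs
begin

text \<open>
  List the vertices of \<open>S\<^sub>k(G)\<close> as the \<open>n\<close> vertices of \<open>G\<close> followed by the \<open>km\<close> middle
  vertices. Both classes are independent sets, so for \<open>t = x - 1 \<noteq> 0\<close> the matrix
  \<open>x I - L(S\<^sub>k(G))\<close> is the block matrix \<open>[t I, B; C, t I]\<close> of the normalized incidences.
  Every middle vertex has degree 2 and each edge of \<open>G\<close> has \<open>k\<close> of them, so \<open>B C = (I + N) / 2\<close>
  with \<open>N = D\<^sup>-\<^sup>1\<^sup>/\<^sup>2 A D\<^sup>-\<^sup>1\<^sup>/\<^sup>2\<close> the normalized adjacency matrix of \<open>G\<close>
  (\<open>norm_adj\<close>), and the Schur complement gives
  \<open>(-2t)\<^sup>n \<chi>\<^sub>S(x) = t\<^sup>k\<^sup>m \<chi>\<^sub>G(4x - 2x\<^sup>2)\<close> for all \<open>x \<noteq> 1\<close>, hence as polynomials.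
  For \<open>\<sigma> \<noteq> 1\<close> the quadratic \<open>4x - 2x\<^sup>2 - (4\<sigma> - 2\<sigma>\<^sup>2)\<close> has the two distinct roots
  \<open>\<sigma>\<close> and \<open>2 - \<sigma>\<close>, so the multiplicity of \<open>\<sigma>\<close> in \<open>\<chi>\<^sub>S\<close> equals that of \<open>4\<sigma> - 2\<sigma>\<^sup>2\<close>
  in \<open>\<chi>\<^sub>G\<close>.
\<close>

section \<open>Polynomials\<close>

lemma poly_eqI_cofinite:
  fixes p q :: "'a::{idom, ring_char_0} poly"
  assumes "finite A" and "\<And>x. x \<notin> A \<Longrightarrow> poly p x = poly q x"
  shows "p = q"
proof (rule ccontr)
  assume "p \<noteq> q"
  then have "finite {x. poly (p - q) x = 0}" by (intro poly_roots_finite) simp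
  moreover have "UNIV \<subseteq> A \<union> {x. poly (p - q) x = 0}" using assms(2) by auto
  ultimately show False
    using assms(1) infinite_UNIV_char_0 by (metis finite_Un finite_subset)
qed

lemma pcompose_power: "pcompose (p ^ n) q = pcompose p q ^ n"
  by (induction n) (simp_all add: pcompose_mult pcompose_1)

lemma order_power:
  fixes p :: "'a::idom poly"
  assumes "p \<noteq> 0"
  shows "order a (p ^ n) = n * order a p"
  by (induction n) (simp_all add: order_mult assms)

lemma order_mult_nonroot:
  fixes p r :: "'a::idom poly"
  assumes "poly r a \<noteq> 0" and "p \<noteq> 0"
  shows "order a (r * p) = order a p"
proof -
  have "r \<noteq> 0" using assms(1) by auto
  then show ?thesis using assms by (simp add: order_mult order_0I)
qed

lemma order_pcompose:
  fixes p q :: "'a::idom poly"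
  assumes "p \<noteq> 0" and "Polynomial.degree q > 0"
  shows "order a (pcompose p q) = order (poly q a) p * order a (q - [:poly q a:])"
proof -
  define c where "c = poly q a"
  obtain g where p: "p = [:-c, 1:] ^ order c p * g" and "\<not> [:-c, 1:] dvd g"
    using order_decomp[OF assms(1)] by blast
  then have g: "poly (pcompose g q) a \<noteq> 0"
    by (simp add: poly_pcompose c_def poly_eq_0_iff_dvd)
  have q: "q - [:c:] \<noteq> 0" using assms(2) by auto
  have "[:-c:] = - [:c:]" by simp
  then have lin: "pcompose [:-c, 1:] q = q - [:c:]"
    by (simp add: pcompose_pCons)
  have "pcompose p q = (q - [:c:]) ^ order c p * pcompose g q"
    by (subst p) (simp only: pcompose_mult pcompose_power lin)
  then show ?thesis
    using q by (simp add: mult.commute[of "_ ^ _"] order_mult_nonroot[OF g] order_power c_def)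
qed

lemma order_quadratic_simple_root:
  fixes s :: "'a::field_char_0"
  assumes "s \<noteq> 1"
  shows "order s ([:0, 4, -2:] - [:poly [:0, 4, -2:] s:]) = 1"
proof -
  have eq: "[:0, 4, -2:] - [:poly [:0, 4, -2:] s:] = Polynomial.smult (-2) ([:-(2 - s), 1:] * [:-s, 1:])"
    by (simp add: algebra_simps)
  have "order s ([:0, 4, -2:] - [:poly [:0, 4, -2:] s:]) = order s ([:-(2 - s), 1:] * [:-s, 1:])"
    unfolding eq by (rule order_smult) simp
  also have "\<dots> = order s [:-s, 1:]"
    by (rule order_mult_nonroot) (use assms in simp_all)
  also have "\<dots> = 1"
    using order_power_n_n[of s 1] by simp
  finally show ?thesis .
qed

section \<open>Matrices\<close>

lemma poly_char_poly_eq_det: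
  fixes A :: "'a::field mat"
  assumes "A \<in> carrier_mat n n"
  shows "poly (char_poly A) x = det (mat n n (\<lambda>(i, j). (if i = j then x else 0) - A $$ (i, j)))"
  unfolding char_poly_def
  by (rule poly_det_cong[of _ n]) (use assms in \<open>auto simp: char_poly_matrix_def\<close>)

lemma char_poly_nonzero:
  fixes A :: "'a::comm_ring_1 mat"
  assumes "A \<in> carrier_mat n n"
  shows "char_poly A \<noteq> 0"
  using degree_monic_char_poly[OF assms] by auto

lemma eigenvalue_iff_order_char_poly:
  fixes A :: "'a::field mat"
  assumes "A \<in> carrier_mat n n"
  shows "eigenvalue A x \<longleftrightarrow> order x (char_poly A) > 0"
  by (simp add: eigenvalue_root_char_poly[OF assms] order_gt_0_iff[OF char_poly_nonzero[OF assms]])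

text \<open>Two enumerations differ by a permutation applied to both rows and columns.\<close>
lemma det_mat_reindex:
  fixes F :: "'v \<Rightarrow> 'v \<Rightarrow> 'a::comm_ring_1"
  assumes e1: "bij_betw e1 {..<N} S" and e2: "bij_betw e2 {..<N} S"
  shows "det (mat N N (\<lambda>(i, j). F (e1 i) (e1 j))) = det (mat N N (\<lambda>(i, j). F (e2 i) (e2 j)))"
proof -
  define p where "p i = (if i < N then the_inv_into {..<N} e2 (e1 i) else i)" for i
  have "bij_betw (the_inv_into {..<N} e2 \<circ> e1) {..<N} {..<N}"
    by (rule bij_betw_trans[OF e1 bij_betw_the_inv_into[OF e2]])
  then have "bij_betw p {..<N} {..<N}"
    by (rule bij_betw_cong[THEN iffD1, rotated]) (auto simp: p_def)
  then have p: "p permutes {0..<N}"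
    by (intro bij_imp_permutes) (auto simp: p_def lessThan_atLeast0[symmetric])
  have pN: "i < N \<Longrightarrow> p i < N" for i
    using p by (metis atLeastLessThan_iff le0 permutes_in_image)
  have e1p: "i < N \<Longrightarrow> e1 i = e2 (p i)" for i
    unfolding p_def using e1 e2 by (simp add: bij_betwE f_the_inv_into_f_bij_betw)
  define A where "A = mat N N (\<lambda>(i, j). F (e2 i) (e2 j))"
  define B where "B = mat N N (\<lambda>(i, j). A $$ (p i, j))"
  have A: "A \<in> carrier_mat N N" and B: "B \<in> carrier_mat N N" by (simp_all add: A_def B_def)
  have eq: "mat N N (\<lambda>(i, j). F (e1 i) (e1 j))
      = transpose_mat (mat N N (\<lambda>(i, j). transpose_mat B $$ (p i, j)))"
    by (rule eq_matI) (auto simp: B_def A_def pN e1p)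
  have "det (mat N N (\<lambda>(i, j). F (e1 i) (e1 j))) = det (mat N N (\<lambda>(i, j). transpose_mat B $$ (p i, j)))"
    unfolding eq by (rule det_transpose[of _ N]) simp
  also have "\<dots> = signof p * det (transpose_mat B)"
    by (rule det_permute_rows[OF _ p]) (simp add: B)
  also have "\<dots> = signof p * signof p * det A"
    using det_transpose[OF B] det_permute_rows[OF A p] by (simp add: B_def)
  also have "signof p * signof p = (1::'a)"
    by (cases p rule: sign_cases) simp_all
  finally show ?thesis by (simp add: A_def)
qed

lemma diag_mult_mult_diag_index:
  fixes X :: "'a::comm_semiring_0 mat"
  assumes X: "X \<in> carrier_mat n n" and i: "i < n" and j: "j < n"
  shows "(mat n n (\<lambda>(i, j). if i = j then f i else 0) * X * mat n n (\<lambda>(i, j). if i = j then g i else 0)) $$ (i, j)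
     = f i * X $$ (i, j) * g j"
proof -
  let ?D1 = "mat n n (\<lambda>(i, j). if i = j then f i else 0)"
  let ?D2 = "mat n n (\<lambda>(i, j). if i = j then g i else 0)"
  have D1X: "(?D1 * X) $$ (i, l) = f i * X $$ (i, l)" if "l < n" for l
  proof -
    have "(?D1 * X) $$ (i, l) = (\<Sum>m\<in>{0..<n}. ?D1 $$ (i, m) * X $$ (m, l))"
      using X i that by (simp add: scalar_prod_def)
    also have "\<dots> = (\<Sum>m\<in>{0..<n}. if m = i then f i * X $$ (m, l) else 0)"
      using i by (intro sum.cong) auto
    finally show ?thesis using i by simp
  qed
  have "(?D1 * X * ?D2) $$ (i, j) = (\<Sum>m\<in>{0..<n}. (?D1 * X) $$ (i, m) * ?D2 $$ (m, j))"
    using X i j by (simp add: scalar_prod_def)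
  also have "\<dots> = (\<Sum>m\<in>{0..<n}. if m = j then f i * X $$ (i, j) * g j else 0)"
    using j D1X by (intro sum.cong) auto
  finally show ?thesis using j by simp
qed

text \<open>Schur complement of the invertible lower right block \<open>t I\<close>.\<close>
lemma det_four_block_mat_scalar_diag:
  fixes B C :: "'a::field mat"
  assumes B: "B \<in> carrier_mat n p" and C: "C \<in> carrier_mat p n" and t: "t \<noteq> 0"
  shows "det (four_block_mat (t \<cdot>\<^sub>m 1\<^sub>m n) B C (t \<cdot>\<^sub>m 1\<^sub>m p))
       = t ^ p * det (t \<cdot>\<^sub>m 1\<^sub>m n - (1 / t) \<cdot>\<^sub>m (B * C))"
proof -
  let ?M = "four_block_mat (t \<cdot>\<^sub>m 1\<^sub>m n) B C (t \<cdot>\<^sub>m 1\<^sub>m p)"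
  let ?N = "four_block_mat (1\<^sub>m n) (0\<^sub>m n p) ((- (1 / t)) \<cdot>\<^sub>m C) (1\<^sub>m p)"
  have M: "?M \<in> carrier_mat (n + p) (n + p)" and N: "?N \<in> carrier_mat (n + p) (n + p)"
    using B C by auto
  have BC: "B * C \<in> carrier_mat n n" using B C by auto
  have e1: "t \<cdot>\<^sub>m 1\<^sub>m n * 1\<^sub>m n + B * ((- (1 / t)) \<cdot>\<^sub>m C) = t \<cdot>\<^sub>m 1\<^sub>m n - (1 / t) \<cdot>\<^sub>m (B * C)"
    using B C BC by (subst mult_smult_distrib[OF B C]) (rule eq_matI, auto)
  have e2: "t \<cdot>\<^sub>m 1\<^sub>m n * 0\<^sub>m n p + B * 1\<^sub>m p = B"
    using B by (intro eq_matI) auto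
  have e3: "C * 1\<^sub>m n + t \<cdot>\<^sub>m 1\<^sub>m p * ((- (1 / t)) \<cdot>\<^sub>m C) = 0\<^sub>m p n"
    using C t by (subst mult_smult_assoc_mat[of _ p p]) (auto intro!: eq_matI)
  have e4: "C * 0\<^sub>m n p + t \<cdot>\<^sub>m 1\<^sub>m p * 1\<^sub>m p = t \<cdot>\<^sub>m 1\<^sub>m p"
    using C by (intro eq_matI) auto
  have MN: "?M * ?N = four_block_mat (t \<cdot>\<^sub>m 1\<^sub>m n - (1 / t) \<cdot>\<^sub>m (B * C)) B (0\<^sub>m p n) (t \<cdot>\<^sub>m 1\<^sub>m p)"
    by (subst mult_four_block_mat[of _ n n _ p _ p _ _ n _ p])
      (use B C in \<open>auto simp only: e1 e2 e3 e4 smult_carrier_mat one_carrier_mat zero_carrier_mat\<close>)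
  have "det ?N = 1"
    by (subst det_four_block_mat_upper_right_zero[of _ n _ p]) (use C in auto)
  then have "det ?M = det (?M * ?N)" by (simp add: det_mult[OF M N])
  also have "\<dots> = det (t \<cdot>\<^sub>m 1\<^sub>m n - (1 / t) \<cdot>\<^sub>m (B * C)) * det (t \<cdot>\<^sub>m 1\<^sub>m p)"
    unfolding MN by (rule det_four_block_mat_lower_left_zero[of _ n _ p]) (use B C in auto)
  finally show ?thesis by simp
qed

definition sum_enum :: "nat \<Rightarrow> (nat \<Rightarrow> 'a) \<Rightarrow> (nat \<Rightarrow> 'b) \<Rightarrow> nat \<Rightarrow> 'a + 'b" where
  "sum_enum n f g i = (if i < n then Inl (f i) else Inr (g (i - n)))"

lemma bij_betw_sum_enum:
  assumes f: "bij_betw f {..<n} A" and g: "bij_betw g {..<p} B"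
  shows "bij_betw (sum_enum n f g) {..<n + p} (Inl ` A \<union> Inr ` B)"
proof -
  have "bij_betw (Inl \<circ> f) {..<n} (Inl ` A)"
    by (rule bij_betw_trans[OF f]) (simp add: bij_betw_def)
  then have left: "bij_betw (sum_enum n f g) {..<n} (Inl ` A)"
    by (rule bij_betw_cong[THEN iffD1, rotated]) (simp add: sum_enum_def)
  have shift: "bij_betw (\<lambda>i. i - n) {n..<n + p} {..<p}"
    by (rule bij_betw_byWitness[where f' = "\<lambda>i. i + n"]) auto
  have "bij_betw (Inr \<circ> g \<circ> (\<lambda>i. i - n)) {n..<n + p} (Inr ` B)"
    by (rule bij_betw_trans[OF shift], rule bij_betw_trans[OF g]) (simp add: bij_betw_def)
  then have right: "bij_betw (sum_enum n f g) {n..<n + p} (Inr ` B)"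
    by (rule bij_betw_cong[THEN iffD1, rotated]) (simp add: sum_enum_def)
  have "{..<n + p} = {..<n} \<union> {n..<n + p}" by auto
  then show ?thesis
    using bij_betw_combine[OF left right] by auto
qed

lemma mat_sum_enum_four_block:
  fixes F :: "'a + 'b \<Rightarrow> 'a + 'b \<Rightarrow> 'c::semiring_1"
  assumes f: "inj_on f {..<n}" and g: "inj_on g {..<p}"
    and FA: "\<And>a b. F (Inl a) (Inl b) = (if a = b then t else 0)"
    and FB: "\<And>a b. F (Inr a) (Inr b) = (if a = b then t else 0)"
  shows "mat (n + p) (n + p) (\<lambda>(i, j). F (sum_enum n f g i) (sum_enum n f g j))
    = four_block_mat (t \<cdot>\<^sub>m 1\<^sub>m n) (mat n p (\<lambda>(i, j). F (Inl (f i)) (Inr (g j))))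
        (mat p n (\<lambda>(i, j). F (Inr (g i)) (Inl (f j)))) (t \<cdot>\<^sub>m 1\<^sub>m p)"
    (is "?L = ?R")
proof (rule eq_matI)
  fix i j assume "i < dim_row ?R" "j < dim_col ?R"
  then have i: "i < n + p" and j: "j < n + p" by auto
  have "f i = f j \<longleftrightarrow> i = j" if "i < n" "j < n"
    using f that by (auto simp: inj_on_def)
  moreover have "g (i - n) = g (j - n) \<longleftrightarrow> i = j" if "\<not> i < n" "\<not> j < n"
  proof -
    have "i - n < p" "j - n < p" using that i j by auto
    then show ?thesis using that inj_onD[OF g, of "i - n" "j - n"] by auto
  qed
  ultimately show "?L $$ (i, j) = ?R $$ (i, j)"
    using i j by (auto simp: sum_enum_def FA FB)
qed auto

section \<open>The normalized Laplacian\<close>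

definition norm_adj :: "'a set \<Rightarrow> ('a \<Rightarrow> 'a \<Rightarrow> bool) \<Rightarrow> 'a \<Rightarrow> 'a \<Rightarrow> real" where
  "norm_adj V E u v =
     (if E u v then 1 / (sqrt (real (degree V E u)) * sqrt (real (degree V E v))) else 0)"

lemma norm_laplacian_carrier: "norm_laplacian V E \<in> carrier_mat (card V) (card V)"
  unfolding norm_laplacian_def deg_inv_sqrt_matrix_def adj_matrix_def
  by (intro minus_carrier_mat mult_carrier_mat) auto

lemma norm_laplacian_eq_mat:
  "norm_laplacian V E = mat (card V) (card V)
     (\<lambda>(i, j). (if i = j then 1 else 0) - norm_adj V E (vertex_enum V i) (vertex_enum V j))"
  (is "_ = ?M")
proof (rule eq_matI)
  fix i j assume "i < dim_row ?M" "j < dim_col ?M"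
  then have i: "i < card V" and j: "j < card V" by auto
  have "(deg_inv_sqrt_matrix V E * adj_matrix V E * deg_inv_sqrt_matrix V E) $$ (i, j)
      = norm_adj V E (vertex_enum V i) (vertex_enum V j)"
    unfolding deg_inv_sqrt_matrix_def
    by (subst diag_mult_mult_diag_index) (use i j in \<open>auto simp: adj_matrix_def norm_adj_def\<close>)
  moreover have "dim_row (deg_inv_sqrt_matrix V E * adj_matrix V E * deg_inv_sqrt_matrix V E) = card V"
    "dim_col (deg_inv_sqrt_matrix V E * adj_matrix V E * deg_inv_sqrt_matrix V E) = card V"
    by (simp_all add: deg_inv_sqrt_matrix_def adj_matrix_def)
  ultimately show "norm_laplacian V E $$ (i, j) = ?M $$ (i, j)"
    using i j unfolding norm_laplacian_def by simp
qed (use norm_laplacian_carrier in auto)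

lemma bij_betw_vertex_enum:
  assumes "finite V"
  shows "bij_betw (vertex_enum V) {..<card V} V"
proof -
  obtain h where "bij_betw h {0..<card V} V"
    using ex_bij_betw_nat_finite[OF assms] by blast
  then show ?thesis
    unfolding vertex_enum_def lessThan_atLeast0 by (rule someI[where x = h])
qed

lemma poly_char_poly_norm_laplacian:
  assumes V: "finite V" and e: "bij_betw e {..<card V} V"
  shows "poly (char_poly (norm_laplacian V E)) x = det (mat (card V) (card V)
     (\<lambda>(i, j). (if e i = e j then x - 1 else 0) + norm_adj V E (e i) (e j)))"
proof -
  let ?ve = "vertex_enum V"
  have "poly (char_poly (norm_laplacian V E)) x = det (mat (card V) (card V)
      (\<lambda>(i, j). (if i = j then x else 0) - norm_laplacian V E $$ (i, j)))"
    by (rule poly_char_poly_eq_det[OF norm_laplacian_carrier])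
  also have "mat (card V) (card V) (\<lambda>(i, j). (if i = j then x else 0) - norm_laplacian V E $$ (i, j))
      = mat (card V) (card V) (\<lambda>(i, j). (if ?ve i = ?ve j then x - 1 else 0) + norm_adj V E (?ve i) (?ve j))"
    (is "?L = ?R")
  proof (rule eq_matI)
    fix i j assume "i < dim_row ?R" "j < dim_col ?R"
    then have i: "i < card V" and j: "j < card V" by simp_all
    then have "?ve i = ?ve j \<longleftrightarrow> i = j"
      using bij_betw_vertex_enum[OF V] by (metis bij_betw_iff_bijections lessThan_iff)
    then show "?L $$ (i, j) = ?R $$ (i, j)"
      using i j by (simp add: norm_laplacian_eq_mat)
  qed auto
  also have "det \<dots> = det (mat (card V) (card V)
      (\<lambda>(i, j). (if e i = e j then x - 1 else 0) + norm_adj V E (e i) (e j)))"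
    by (rule det_mat_reindex[OF bij_betw_vertex_enum[OF V] e,
          where F = "\<lambda>u v. (if u = v then x - 1 else 0) + norm_adj V E u v"])
  finally show ?thesis .
qed

section \<open>Simple graphs\<close>

context
  fixes V :: "'a set" and E :: "'a \<Rightarrow> 'a \<Rightarrow> bool"
  assumes simple: "simple_graph V E"
begin

lemma finite_graph_edges: "finite (graph_edges V E)"
proof -
  have "graph_edges V E \<subseteq> Pow V" by (auto simp: graph_edges_def)
  then show ?thesis
    using simple by (meson finite_Pow_iff finite_subset simple_graph_def)
qed

lemma graph_edgesE:
  assumes "e \<in> graph_edges V E"
  obtains a b where "e = {a, b}" "a \<noteq> b" "E a b"
  using assms simple unfolding graph_edges_def simple_graph_def by blast

lemma card_incident_edges:
  assumes a: "a \<in> V"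
  shows "card {e \<in> graph_edges V E. a \<in> e} = degree V E a"
proof -
  have "{e \<in> graph_edges V E. a \<in> e} = (\<lambda>u. {a, u}) ` {u \<in> V. E a u}"
  proof
    show "{e \<in> graph_edges V E. a \<in> e} \<subseteq> (\<lambda>u. {a, u}) ` {u \<in> V. E a u}"
      using simple by (auto simp: graph_edges_def simple_graph_def insert_commute)
    show "(\<lambda>u. {a, u}) ` {u \<in> V. E a u} \<subseteq> {e \<in> graph_edges V E. a \<in> e}"
      using a by (auto simp: graph_edges_def)
  qed
  moreover have "inj_on (\<lambda>u. {a, u}) {u \<in> V. E a u}"
    by (auto simp: inj_on_def doubleton_eq_iff)
  ultimately show ?thesis
    unfolding degree_def by (simp add: card_image)
qed

lemma card_common_edges:
  assumes a: "a \<in> V" and b: "b \<in> V"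
  shows "card {e \<in> graph_edges V E. a \<in> e \<and> b \<in> e}
    = (if a = b then degree V E a else if E a b then 1 else 0)"
proof (cases "a = b")
  case True
  then show ?thesis using card_incident_edges[OF a] by simp
next
  case False
  have "{e \<in> graph_edges V E. a \<in> e \<and> b \<in> e} = (if E a b then {{a, b}} else {})"
  proof (intro equalityI subsetI)
    fix e assume e: "e \<in> {e \<in> graph_edges V E. a \<in> e \<and> b \<in> e}"
    then obtain c d where "e = {c, d}" "E c d" by (blast elim: graph_edgesE)
    then show "e \<in> (if E a b then {{a, b}} else {})"
      using e False simple by (auto simp: simple_graph_def)
  qed (use a b in \<open>auto simp: graph_edges_def split: if_splits\<close>)
  then show ?thesis using False by simp
qed

end

lemma degree_pos:
  assumes "simple_graph V E" and "connected_graph V E" and "card V \<ge> 2" and v: "v \<in> V"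
  shows "degree V E v > 0"
proof -
  have "finite V" using assms(1) by (simp add: simple_graph_def)
  have "\<not> V \<subseteq> {v}"
    using card_mono[of "{v}" V] assms(3) by auto
  then obtain u where u: "u \<in> V" "u \<noteq> v" by auto
  then have "E\<^sup>*\<^sup>* v u" using assms(2) v by (simp add: connected_graph_def)
  then obtain w where "E v w" using u(2) by (metis converse_rtranclpE)
  then have "w \<in> {u \<in> V. E v u}" using assms(1) by (simp add: simple_graph_def)
  then show ?thesis
    unfolding degree_def using \<open>finite V\<close> by (auto simp: card_gt_0_iff)
qed

section \<open>Parallel subdivision\<close>

lemma subdiv_adj_simps [simp]:
  "\<not> subdiv_adj k V E (Inl a) (Inl b)"
  "\<not> subdiv_adj k V E (Inr w) (Inr w')"
  "subdiv_adj k V E (Inl a) (Inr (e, j)) \<longleftrightarrow> a \<in> e \<and> e \<in> graph_edges V E \<and> j < k"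
  "subdiv_adj k V E (Inr (e, j)) (Inl a) \<longleftrightarrow> a \<in> e \<and> e \<in> graph_edges V E \<and> j < k"
  by (auto simp: subdiv_adj_def graph_edges_def)

context
  fixes V :: "'a set" and E :: "'a \<Rightarrow> 'a \<Rightarrow> bool" and k :: nat
  assumes simple: "simple_graph V E"
begin

lemma finite_subdiv_vertices: "finite (subdiv_vertices k V E)"
  using simple finite_graph_edges[OF simple]
  by (simp add: subdiv_vertices_def simple_graph_def)

lemma card_subdiv_vertices: "card (subdiv_vertices k V E) = card V + k * card (graph_edges V E)"
  using simple finite_graph_edges[OF simple] unfolding subdiv_vertices_def
  by (subst card_Un_disjoint) (auto simp: simple_graph_def card_image card_cartesian_product)

lemma degree_subdiv_Inl:
  assumes "a \<in> V"
  shows "degree (subdiv_vertices k V E) (subdiv_adj k V E) (Inl a) = k * degree V E a"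
proof -
  have "{y \<in> subdiv_vertices k V E. subdiv_adj k V E (Inl a) y}
      = Inr ` ({e \<in> graph_edges V E. a \<in> e} \<times> {..<k})"
    by (auto simp: subdiv_vertices_def)
  then have "degree (subdiv_vertices k V E) (subdiv_adj k V E) (Inl a)
      = card ({e \<in> graph_edges V E. a \<in> e} \<times> {..<k})"
    unfolding degree_def by (simp add: card_image)
  then show ?thesis
    using card_incident_edges[OF simple assms] finite_graph_edges[OF simple]
    by (simp add: card_cartesian_product)
qed

lemma degree_subdiv_Inr:
  assumes "e \<in> graph_edges V E" and "j < k"
  shows "degree (subdiv_vertices k V E) (subdiv_adj k V E) (Inr (e, j)) = 2"
proof -
  obtain a b where ab: "e = {a, b}" "a \<noteq> b" using graph_edgesE[OF simple assms(1)] by blast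
  have "e \<subseteq> V" using assms(1) by (auto simp: graph_edges_def)
  then have "{y \<in> subdiv_vertices k V E. subdiv_adj k V E (Inr (e, j)) y} = Inl ` e"
    using assms by (auto simp: subdiv_vertices_def)
  then show ?thesis
    unfolding degree_def using ab by (simp add: card_image)
qed

lemma norm_adj_subdiv_product:
  assumes "a \<in> V" and "b \<in> V" and "e \<in> graph_edges V E" and "j < k"
  shows "norm_adj (subdiv_vertices k V E) (subdiv_adj k V E) (Inl a) (Inr (e, j))
      * norm_adj (subdiv_vertices k V E) (subdiv_adj k V E) (Inr (e, j)) (Inl b)
    = (if a \<in> e \<and> b \<in> e
       then 1 / (2 * real k * (sqrt (real (degree V E a)) * sqrt (real (degree V E b)))) else 0)"
proof -
  have factor: "norm_adj (subdiv_vertices k V E) (subdiv_adj k V E) (Inl c) (Inr (e, j))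
      = (if c \<in> e then 1 / sqrt (2 * real k * real (degree V E c)) else 0)"
    "norm_adj (subdiv_vertices k V E) (subdiv_adj k V E) (Inr (e, j)) (Inl c)
      = (if c \<in> e then 1 / sqrt (2 * real k * real (degree V E c)) else 0)" if "c \<in> V" for c
    using assms(3,4) that
    by (simp_all add: norm_adj_def degree_subdiv_Inl degree_subdiv_Inr real_sqrt_mult mult_ac)
  have "sqrt (2 * real k * x) * sqrt (2 * real k * y)
      = (sqrt (2 * real k) * sqrt (2 * real k)) * (sqrt x * sqrt y)" for x y
    unfolding real_sqrt_mult[of "2 * real k"] by (simp only: mult_ac)
  then have "sqrt (2 * real k * x) * sqrt (2 * real k * y) = 2 * real k * (sqrt x * sqrt y)" for x y
    by simp
  then show ?thesis
    using assms(1,2) by (simp add: factor)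
qed

end

lemma subdiv_norm_adj_sum:
  assumes simple: "simple_graph V E" and "connected_graph V E" and "card V \<ge> 2" and "k \<ge> 1"
    and a: "a \<in> V" and b: "b \<in> V"
  shows "(\<Sum>w \<in> graph_edges V E \<times> {..<k}.
      norm_adj (subdiv_vertices k V E) (subdiv_adj k V E) (Inl a) (Inr w)
      * norm_adj (subdiv_vertices k V E) (subdiv_adj k V E) (Inr w) (Inl b))
    = ((if a = b then 1 else 0) + norm_adj V E a b) / 2"
proof -
  let ?S = "subdiv_vertices k V E" and ?A = "subdiv_adj k V E" and ?Ed = "graph_edges V E"
  define da where "da = real (degree V E a)"
  define db where "db = real (degree V E b)"
  define c where "c = 1 / (2 * real k * (sqrt da * sqrt db))"
  have summand: "norm_adj ?S ?A (Inl a) (Inr (e, j)) * norm_adj ?S ?A (Inr (e, j)) (Inl b)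
      = (if a \<in> e \<and> b \<in> e then c else 0)" if "e \<in> ?Ed" "j < k" for e j
    using norm_adj_subdiv_product[OF simple a b that] by (simp add: c_def da_def db_def)
  have "(\<Sum>w \<in> ?Ed \<times> {..<k}. norm_adj ?S ?A (Inl a) (Inr w) * norm_adj ?S ?A (Inr w) (Inl b))
      = (\<Sum>e \<in> ?Ed. \<Sum>j<k. norm_adj ?S ?A (Inl a) (Inr (e, j)) * norm_adj ?S ?A (Inr (e, j)) (Inl b))"
    by (simp add: sum.cartesian_product case_prod_unfold)
  also have "\<dots> = (\<Sum>e \<in> ?Ed. real k * (if a \<in> e \<and> b \<in> e then c else 0))"
    by (intro sum.cong refl) (simp add: summand)
  also have "\<dots> = real k * c * real (card {e \<in> ?Ed. a \<in> e \<and> b \<in> e})"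
    using finite_graph_edges[OF simple]
    by (simp add: sum_distrib_left[symmetric] sum.inter_filter[symmetric])
  also have "\<dots> = ((if a = b then 1 else 0) + norm_adj V E a b) / 2"
  proof (cases "a = b")
    case True
    have "da > 0" using degree_pos[OF assms(1-3) a] by (simp add: da_def)
    moreover have "\<not> E a a" using simple by (simp add: simple_graph_def)
    ultimately show ?thesis
      using True assms(4) by (simp add: card_incident_edges[OF simple b] c_def da_def db_def norm_adj_def)
  next
    case False
    then show ?thesis
      using assms(4) by (simp add: card_common_edges[OF simple a b] c_def da_def db_def norm_adj_def)
  qed
  finally show ?thesis .
qed

lemma subdiv_block_product:
  assumes "simple_graph V E" and "connected_graph V E" and "card V \<ge> 2" and "k \<ge> 1"
    and f: "f ` {..<n} \<subseteq> V" and g: "bij_betw g {..<p} (graph_edges V E \<times> {..<k})"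
    and i: "i < n" and j: "j < n"
  shows "(mat n p (\<lambda>(i, j). norm_adj (subdiv_vertices k V E) (subdiv_adj k V E) (Inl (f i)) (Inr (g j)))
      * mat p n (\<lambda>(i, j). norm_adj (subdiv_vertices k V E) (subdiv_adj k V E) (Inr (g i)) (Inl (f j))))
      $$ (i, j) = ((if f i = f j then 1 else 0) + norm_adj V E (f i) (f j)) / 2"
proof -
  let ?N = "norm_adj (subdiv_vertices k V E) (subdiv_adj k V E)"
  have "(mat n p (\<lambda>(i, j). ?N (Inl (f i)) (Inr (g j))) * mat p n (\<lambda>(i, j). ?N (Inr (g i)) (Inl (f j))))
      $$ (i, j) = (\<Sum>l \<in> {..<p}. ?N (Inl (f i)) (Inr (g l)) * ?N (Inr (g l)) (Inl (f j)))"
    using i j by (simp add: scalar_prod_def lessThan_atLeast0)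
  also have "\<dots> = (\<Sum>w \<in> graph_edges V E \<times> {..<k}. ?N (Inl (f i)) (Inr w) * ?N (Inr w) (Inl (f j)))"
    by (rule sum.reindex_bij_betw[OF g])
  also have "\<dots> = ((if f i = f j then 1 else 0) + norm_adj V E (f i) (f j)) / 2"
    using f i j by (intro subdiv_norm_adj_sum[OF assms(1-4)]) auto
  finally show ?thesis .
qed

lemma subdiv_schur_complement:
  assumes "simple_graph V E" and "connected_graph V E" and "card V \<ge> 2" and "k \<ge> 1"
    and f: "bij_betw f {..<n} V" and g: "bij_betw g {..<p} (graph_edges V E \<times> {..<k})"
    and t: "t \<noteq> 0"
  shows "t \<cdot>\<^sub>m 1\<^sub>m n - (1 / t) \<cdot>\<^sub>m
      (mat n p (\<lambda>(i, j). norm_adj (subdiv_vertices k V E) (subdiv_adj k V E) (Inl (f i)) (Inr (g j)))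
      * mat p n (\<lambda>(i, j). norm_adj (subdiv_vertices k V E) (subdiv_adj k V E) (Inr (g i)) (Inl (f j))))
    = (-1 / (2 * t)) \<cdot>\<^sub>m
      mat n n (\<lambda>(i, j). (if f i = f j then 1 - 2 * t\<^sup>2 else 0) + norm_adj V E (f i) (f j))"
    (is "t \<cdot>\<^sub>m 1\<^sub>m n - (1 / t) \<cdot>\<^sub>m (?B * ?C) = ?R")
proof (rule eq_matI)
  fix i j assume "i < dim_row ?R" "j < dim_col ?R"
  then have i: "i < n" and j: "j < n" by simp_all
  then have "f i = f j \<longleftrightarrow> i = j"
    using f by (metis bij_betw_iff_bijections lessThan_iff)
  moreover have "(?B * ?C) $$ (i, j) = ((if f i = f j then 1 else 0) + norm_adj V E (f i) (f j)) / 2"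
    by (rule subdiv_block_product[OF assms(1-4) _ g i j]) (use f in \<open>auto simp: bij_betw_def\<close>)
  ultimately show "(t \<cdot>\<^sub>m 1\<^sub>m n - (1 / t) \<cdot>\<^sub>m (?B * ?C)) $$ (i, j) = ?R $$ (i, j)"
    using i j t by (simp add: field_simps power2_eq_square)
qed auto

lemma poly_char_poly_subdivision:
  assumes simple: "simple_graph V E" and "connected_graph V E" and "card V \<ge> 2" and "k \<ge> 1"
    and x: "x \<noteq> 1"
  shows "poly (char_poly (norm_laplacian (subdiv_vertices k V E) (subdiv_adj k V E))) x
    = (x - 1) ^ (k * card (graph_edges V E)) * (-1 / (2 * (x - 1))) ^ card V
      * poly (char_poly (norm_laplacian V E)) (4 * x - 2 * x\<^sup>2)"
proof -
  let ?S = "subdiv_vertices k V E" and ?A = "subdiv_adj k V E" and ?Ed = "graph_edges V E"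
  define n where "n = card V"
  define p where "p = k * card ?Ed"
  define t where "t = x - 1"
  define q where "q = 4 * x - 2 * x\<^sup>2"
  have t: "t \<noteq> 0" using x by (simp add: t_def)
  have q: "q - 1 = 1 - 2 * t\<^sup>2" by (simp add: q_def t_def algebra_simps power2_eq_square)
  have V: "finite V" using simple by (simp add: simple_graph_def)
  obtain f where f: "bij_betw f {..<n} V"
    using bij_betw_vertex_enum[OF V] n_def by blast
  have "finite (?Ed \<times> {..<k})" "card (?Ed \<times> {..<k}) = p"
    using finite_graph_edges[OF simple] by (simp_all add: card_cartesian_product p_def)
  then obtain g where g: "bij_betw g {..<p} (?Ed \<times> {..<k})"
    by (metis ex_bij_betw_nat_finite lessThan_atLeast0)
  define F where "F y z = (if y = z then t else 0) + norm_adj ?S ?A y z" for y z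
  define B where "B = mat n p (\<lambda>(i, j). norm_adj ?S ?A (Inl (f i)) (Inr (g j)))"
  define C where "C = mat p n (\<lambda>(i, j). norm_adj ?S ?A (Inr (g i)) (Inl (f j)))"
  have S: "card ?S = n + p"
    by (simp add: card_subdiv_vertices[OF simple] n_def p_def)
  have "bij_betw (sum_enum n f g) {..<card ?S} ?S"
    unfolding S by (unfold subdiv_vertices_def) (rule bij_betw_sum_enum[OF f g])
  then have "poly (char_poly (norm_laplacian ?S ?A)) x
      = det (mat (n + p) (n + p) (\<lambda>(i, j). F (sum_enum n f g i) (sum_enum n f g j)))"
    unfolding F_def t_def using poly_char_poly_norm_laplacian[OF finite_subdiv_vertices[OF simple]]
    by (simp add: S)
  also have "\<dots> = det (four_block_mat (t \<cdot>\<^sub>m 1\<^sub>m n) B C (t \<cdot>\<^sub>m 1\<^sub>m p))"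
    using bij_betw_imp_inj_on[OF f] bij_betw_imp_inj_on[OF g]
    by (subst mat_sum_enum_four_block) (auto simp: F_def B_def C_def norm_adj_def)
  also have "\<dots> = t ^ p * det (t \<cdot>\<^sub>m 1\<^sub>m n - (1 / t) \<cdot>\<^sub>m (B * C))"
    by (rule det_four_block_mat_scalar_diag) (simp_all add: B_def C_def t)
  also have "t \<cdot>\<^sub>m 1\<^sub>m n - (1 / t) \<cdot>\<^sub>m (B * C) = (-1 / (2 * t)) \<cdot>\<^sub>m
      mat n n (\<lambda>(i, j). (if f i = f j then q - 1 else 0) + norm_adj V E (f i) (f j))"
    unfolding B_def C_def q by (rule subdiv_schur_complement[OF assms(1-4) f g t])
  also have "det ((-1 / (2 * t)) \<cdot>\<^sub>m
      mat n n (\<lambda>(i, j). (if f i = f j then q - 1 else 0) + norm_adj V E (f i) (f j)))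
      = (-1 / (2 * t)) ^ n * poly (char_poly (norm_laplacian V E)) q"
    using poly_char_poly_norm_laplacian[OF V] f by (simp add: n_def)
  finally show ?thesis by (simp add: t_def p_def n_def q_def)
qed


lemma char_poly_subdivision:
  assumes "simple_graph V E" and "connected_graph V E" and "card V \<ge> 2" and "k \<ge> 1"
  shows "Polynomial.smult ((-2) ^ card V)
      ([:-1, 1:] ^ card V * char_poly (norm_laplacian (subdiv_vertices k V E) (subdiv_adj k V E)))
    = [:-1, 1:] ^ (k * card (graph_edges V E)) * pcompose (char_poly (norm_laplacian V E)) [:0, 4, -2:]"
proof (rule poly_eqI_cofinite[of "{1}"])
  fix x :: real assume "x \<notin> {1}"
  then have "(-2) * (x - 1) * (-1 / (2 * (x - 1))) = 1"
    by (simp add: field_simps)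
  then have "(-2) ^ card V * (x - 1) ^ card V * (-1 / (2 * (x - 1))) ^ card V = 1"
    by (metis power_mult_distrib power_one)
  moreover have "poly [:0, 4, -2:] x = 4 * x - 2 * x\<^sup>2"
    by (simp add: algebra_simps power2_eq_square)
  ultimately show "poly (Polynomial.smult ((-2) ^ card V)
      ([:-1, 1:] ^ card V * char_poly (norm_laplacian (subdiv_vertices k V E) (subdiv_adj k V E)))) x
    = poly ([:-1, 1:] ^ (k * card (graph_edges V E)) * pcompose (char_poly (norm_laplacian V E)) [:0, 4, -2:]) x"
    using \<open>x \<notin> {1}\<close> by (simp add: poly_char_poly_subdivision[OF assms] poly_pcompose mult_ac)
qed simp

theorem lemma3p1:
  fixes V :: "'a set" and E :: "'a \<Rightarrow> 'a \<Rightarrow> bool" and k :: nat and \<sigma> :: real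
  assumes "simple_graph V E" and "connected_graph V E" and "card V \<ge> 2"
    and "k \<ge> 1"
    and "\<sigma> \<noteq> 1"
    and "eigenvalue (norm_laplacian (subdiv_vertices k V E) (subdiv_adj k V E)) \<sigma>"
  shows "eigenvalue (norm_laplacian V E) (4 * \<sigma> - 2 * \<sigma>\<^sup>2)
    \<and> order (4 * \<sigma> - 2 * \<sigma>\<^sup>2) (char_poly (norm_laplacian V E))
      = order \<sigma> (char_poly (norm_laplacian (subdiv_vertices k V E) (subdiv_adj k V E)))"
proof -
  let ?\<chi>S = "char_poly (norm_laplacian (subdiv_vertices k V E) (subdiv_adj k V E))"
    and ?\<chi>G = "char_poly (norm_laplacian V E)" and ?Q = "[:0, 4, -2:] :: real poly"
  have nonroot: "poly ([:-1, 1:] ^ m) \<sigma> \<noteq> 0" for m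
    using assms(5) by simp
  have "?\<chi>S \<noteq> 0" "?\<chi>G \<noteq> 0"
    by (simp_all add: char_poly_nonzero[OF norm_laplacian_carrier])
  then have "pcompose ?\<chi>G ?Q \<noteq> 0" by (simp add: pcompose_eq_0_iff)
  have "order \<sigma> ?\<chi>S = order \<sigma> (Polynomial.smult ((-2) ^ card V) ([:-1, 1:] ^ card V * ?\<chi>S))"
    using \<open>?\<chi>S \<noteq> 0\<close> by (simp add: order_smult order_mult_nonroot[OF nonroot])
  also have "\<dots> = order \<sigma> ([:-1, 1:] ^ (k * card (graph_edges V E)) * pcompose ?\<chi>G ?Q)"
    by (simp only: char_poly_subdivision[OF assms(1-4)])
  also have "\<dots> = order (poly ?Q \<sigma>) ?\<chi>G * order \<sigma> (?Q - [:poly ?Q \<sigma>:])"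
    using \<open>pcompose ?\<chi>G ?Q \<noteq> 0\<close> \<open>?\<chi>G \<noteq> 0\<close>
    by (simp add: order_mult_nonroot[OF nonroot] order_pcompose)
  also have "\<dots> = order (poly ?Q \<sigma>) ?\<chi>G"
    by (simp only: order_quadratic_simple_root[OF assms(5)] mult_1_right)
  also have "poly ?Q \<sigma> = 4 * \<sigma> - 2 * \<sigma>\<^sup>2"
    by (simp add: algebra_simps power2_eq_square)
  finally show ?thesis
    using assms(6) by (simp add: eigenvalue_iff_order_char_poly[OF norm_laplacian_carrier])
qed

end
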